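(* Let $\alpha>0$, $\beta>0$, $M\in\mathbb{R}$, let $(a,b)$ be a bounded interval, and let $v$ be a local minimizer of $\mathcal{G}(\alpha,\beta,Mx,(a,b),\cdot)$. If $M\ne0$, set $L_0:=2\bigl(\frac{\alpha}{\beta M^2}\bigr)^{1/3}$. Then: (1) If $M\ne0$ and $b-a>L_0$, then in $(a,b)$ there is either a jump point $x\in S_v$ or a point $y\in(a,b)\setminus S_v$ with $v(y)=My$. (2) If $x\in S_v$, then $v(x^+)-Mx=Mx-v(x^-)$, and if $M\ne0$ this value has the same sign as $M$. (3) If $x_1<x_2$ are consecutive jump points of $v$ (no other jump points in $(x_1,x_2)$), then $v(x)=M(x_1+x_2)/2$ for every $x\in(x_1,x_2)$. (4) If $M\ne0$ and $y_1<y_2<\dots<y_m$ are the points of $(a,b)$ where $v$ intersects the line $Mx$, then $y_2-y_1=y_3-y_2=\dots=y_m-y_{m-1}$.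
   Context: $S((a,b))$ is the space of step functions with finitely many jumps on $(a,b)$ (BV functions with zero diffuse derivative and finite jump set $S_u$); $u(x^\pm)$ are one-sided values, and $u(a),u(b)$ denote values near the endpoints. $\mathcal{G}(\alpha,\beta,f,(a,b),u)=\alpha\,\#(S_u\cap(a,b))+\beta\int_a^b(u-f)^2dx$, here with $f(x)=Mx$. A local minimizer is $v\in S((a,b))$ with $\mathcal{G}(\alpha,\beta,f,(a,b),v)\le\mathcal{G}(\alpha,\beta,f,(a,b),u)$ for every $u\in S((a,b))$ with $u(a)=v(a)$, $u(b)=v(b)$. An intersection point of $v$ with the line $Mx$ is a point $y\in(a,b)\setminus S_v$ with $v(y)=My$. *)

theory Defs
  imports "HOL-Analysis.Analysis"
begin

text \<open>Values at single points are irrelevant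
(BV functions are a.e. classes); we work with one-sided limits.\<close>

definition step_fun :: "real \<Rightarrow> real \<Rightarrow> (real \<Rightarrow> real) \<Rightarrow> bool" where
  "step_fun a b u \<longleftrightarrow> (\<exists>S. finite S \<and> S \<subseteq> {a<..<b} \<and>
      (\<forall>x\<in>{a<..<b} - S. \<exists>e>0. \<forall>y\<in>ball x e. u y = u x))"

definition rval :: "(real \<Rightarrow> real) \<Rightarrow> real \<Rightarrow> real" where
  "rval u x = Lim (at_right x) u"

definition lval :: "(real \<Rightarrow> real) \<Rightarrow> real \<Rightarrow> real" where
  "lval u x = Lim (at_left x) u"

definition jumpset :: "real \<Rightarrow> real \<Rightarrow> (real \<Rightarrow> real) \<Rightarrow> real set" where
  "jumpset a b u = {x\<in>{a<..<b}. lval u x \<noteq> rval u x}"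

definition G :: "real \<Rightarrow> real \<Rightarrow> (real \<Rightarrow> real) \<Rightarrow> real \<Rightarrow> real \<Rightarrow> (real \<Rightarrow> real) \<Rightarrow> real" where
  "G \<alpha> \<beta> f a b u = \<alpha> * real (card (jumpset a b u)) + \<beta> * integral {a..b} (\<lambda>x. (u x - f x)\<^sup>2)"

definition local_min :: "real \<Rightarrow> real \<Rightarrow> (real \<Rightarrow> real) \<Rightarrow> real \<Rightarrow> real \<Rightarrow> (real \<Rightarrow> real) \<Rightarrow> bool" where
  "local_min \<alpha> \<beta> f a b v \<longleftrightarrow> step_fun a b v \<and>
     (\<forall>u. step_fun a b u \<and> rval u a = rval v a \<and> lval u b = lval v b
          \<longrightarrow> G \<alpha> \<beta> f a b v \<le> G \<alpha> \<beta> f a b u)"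

text \<open>Intersection points of v with the line M x (v(y) is the precise value, i.e. the
common one-sided limit at a non-jump point).\<close>
definition intersections :: "real \<Rightarrow> real \<Rightarrow> real \<Rightarrow> (real \<Rightarrow> real) \<Rightarrow> real set" where
  "intersections M a b v = {y\<in>{a<..<b} - jumpset a b v. rval v y = M * y}"

end

theory Submission
  imports Defs
begin

text \<open>
  A local minimizer cannot be improved by the competitor that replaces v on a subinterval
  (p,q) of (a,b) by a constant g. This creates at most the two jumps at p and q and changes the
  fidelity term by \<open>\<integral>\<^sub>p\<^sup>q (g - Mx)\<^sup>2 - (c - Mx)\<^sup>2 = (g - c)(q - p)(g + c - M(p + q))\<close>,
  where c is the value of v on (p,q). Between consecutive jumps the optimal constant
  \<open>M(p + q)/2\<close> therefore has to be the value of v, which is (3). On a long interval without jumps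
  and intersections, the gain \<open>\<ge> \<beta> M\<^sup>2 (q - p)\<^sup>3/4\<close> from that constant outweighs the price
  \<open>2\<alpha>\<close> of two new jumps, which is (1). Moving a jump at x to \<open>x \<plusminus> t\<close> does not change the number
  of jumps, and letting t tend to 0 gives the balance and sign conditions (2). Between two
  consecutive intersections, (2) and (3) leave room for exactly one jump, at the midpoint, and
  (3) applied to the jumps on either side of an intersection gives (4).
\<close>

lemma connected_locally_const_imp_const:
  assumes "connected A" "\<forall>y\<in>A. \<forall>\<^sub>F z in nhds y. u z = u y"
  obtains c where "\<forall>y\<in>A. u y = c"
proof (cases "A = {}")
  case False
  then obtain y0 where "y0 \<in> A" by blast
  have "u y = u y0" if "y \<in> A" for y
  proof (rule connected_local_const[OF assms(1) that \<open>y0 \<in> A\<close>], rule ballI)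
    fix w assume "w \<in> A"
    then have "\<forall>\<^sub>F z in nhds w. u w = u z"
      using assms(2) by (metis (mono_tags, lifting) eventually_mono)
    then have "\<forall>\<^sub>F z in at w. u w = u z"
      by (simp add: eventually_nhds_conv_at)
    then show "\<forall>\<^sub>F z in at w within A. u w = u z"
      by (rule filter_leD[OF at_le, rotated]) simp
  qed
  then show ?thesis using that by blast
qed (use that in blast)

lemma nonpos_if_le_small_multiples:
  fixes X C e :: real
  assumes "e > 0" "\<forall>t\<in>{0<..<e}. X \<le> C * t"
  shows "X \<le> 0"
proof -
  have "((\<lambda>t. C * t) \<longlongrightarrow> 0) (at_right 0)"
    by (auto intro!: tendsto_eq_intros)
  moreover have "\<forall>\<^sub>F t in at_right 0. X \<le> C * t"
    using assms by (intro eventually_at_rightI[of 0 e]) auto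
  ultimately show ?thesis by (rule tendsto_lowerbound) simp
qed

lemma card_insert_Diff_swap:
  assumes "finite J" "x \<in> J" "y \<notin> J"
  shows "card (insert y (J - {x})) = card J"
proof -
  have "card J > 0" using assms by (auto simp: card_gt_0_iff)
  then show ?thesis using assms by (simp add: card_Diff_singleton)
qed

lemma finite_nearest_above:
  fixes J :: "'a::linorder set"
  assumes "finite J" "x' \<in> J" "x < x'"
  obtains z where "z \<in> J" "x < z" "z \<le> x'" "{x<..<z} \<inter> J = {}"
proof
  let ?A = "J \<inter> {x<..x'}"
  have A: "?A \<noteq> {}" "finite ?A" using assms by auto
  then show "Min ?A \<in> J" "x < Min ?A" "Min ?A \<le> x'"
    using Min_in[OF A(2,1)] by auto
  show "{x<..<Min ?A} \<inter> J = {}"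
    using Min_le[OF A(2)] \<open>Min ?A \<le> x'\<close> by fastforce
qed

section \<open>One-sided limits\<close>

lemma rval_eventually_const:
  assumes "\<forall>\<^sub>F y in at_right x. u y = c"
  shows "rval u x = c"
  unfolding rval_def using assms by (intro tendsto_Lim tendsto_eventually) auto

lemma lval_eventually_const:
  assumes "\<forall>\<^sub>F y in at_left x. u y = c"
  shows "lval u x = c"
  unfolding lval_def using assms by (intro tendsto_Lim tendsto_eventually) auto

lemma rval_const_on:
  assumes "\<forall>y\<in>{p<..<q}. u y = c" "x \<in> {p..<q}"
  shows "rval u x = c"
  using assms by (intro rval_eventually_const eventually_at_rightI[of x q]) auto

lemma lval_const_on:
  assumes "\<forall>y\<in>{p<..<q}. u y = c" "x \<in> {p<..q}"
  shows "lval u x = c"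
  using assms by (intro lval_eventually_const eventually_at_leftI[of p x]) auto

lemma rval_lval_locally_const:
  assumes "\<forall>\<^sub>F y in nhds x. u y = u x"
  shows "rval u x = u x" "lval u x = u x"
proof -
  have "\<forall>\<^sub>F y in at x. u y = u x"
    using assms eventually_nhds_conv_at by blast
  then show "rval u x = u x" "lval u x = u x"
    by (auto intro: rval_eventually_const lval_eventually_const simp: eventually_at_split)
qed

section \<open>Step functions\<close>

lemma step_fun_iff_eventually:
  "step_fun a b u \<longleftrightarrow> (\<exists>S. finite S \<and> S \<subseteq> {a<..<b} \<and>
      (\<forall>x\<in>{a<..<b} - S. \<forall>\<^sub>F y in nhds x. u y = u x))"
  unfolding step_fun_def eventually_nhds_metric by (simp add: ball_def dist_commute)

lemma step_fun_one_sided: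
  assumes "step_fun a b v" "x \<in> {a<..<b}"
  obtains e where "e > 0" "a < x - e" "x + e < b"
    "\<forall>y\<in>{x-e<..<x}. v y = lval v x" "\<forall>y\<in>{x<..<x+e}. v y = rval v x"
proof -
  obtain S where S: "finite S" "\<forall>z\<in>{a<..<b} - S. \<forall>\<^sub>F y in nhds z. v y = v z"
    using assms(1) unfolding step_fun_iff_eventually by blast
  obtain d where d: "d > 0" "\<forall>s\<in>S. s \<noteq> x \<longrightarrow> d \<le> dist x s"
    using finite_set_avoid[OF S(1)] by blast
  define e where "e = min d (min (x - a) (b - x)) / 2"
  have "e > 0" "e \<le> d / 2" "e \<le> (x - a) / 2" "e \<le> (b - x) / 2"
    using d assms(2) by (auto simp: e_def)
  then have e: "e > 0" "e < d" "a < x - e" "x + e < b"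
    using d(1) assms(2) by auto
  have const: "\<exists>c. \<forall>y\<in>I. v y = c" if "connected I" "I \<subseteq> {x-e<..<x+e} - {x}" for I
  proof -
    have "I \<subseteq> {a<..<b} - S"
      using that(2) d e by (force simp: dist_real_def)
    then show ?thesis
      using connected_locally_const_imp_const[OF that(1)] S(2) by (metis subsetD)
  qed
  have "\<exists>c. \<forall>y\<in>{x-e<..<x}. v y = c" "\<exists>c. \<forall>y\<in>{x<..<x+e}. v y = c"
    using e(1) by (intro const; auto)+
  then obtain cl cr where cl: "\<forall>y\<in>{x-e<..<x}. v y = cl" and cr: "\<forall>y\<in>{x<..<x+e}. v y = cr"
    by blast
  have "lval v x = cl" using cl e by (intro lval_const_on) auto
  moreover have "rval v x = cr" using cr e by (intro rval_const_on) auto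
  ultimately show ?thesis using that e cl cr by blast
qed

lemma jumpset_finite:
  assumes "step_fun a b v"
  shows "finite (jumpset a b v)"
proof -
  obtain S where S: "finite S" "\<forall>z\<in>{a<..<b} - S. \<forall>\<^sub>F y in nhds z. v y = v z"
    using assms unfolding step_fun_iff_eventually by blast
  have "jumpset a b v \<subseteq> S"
    using S(2) rval_lval_locally_const unfolding jumpset_def by fastforce
  then show ?thesis using S(1) finite_subset by blast
qed

lemma jumpset_isolated:
  assumes v: "step_fun a b v" and x: "x \<in> {a<..<b}"
  obtains e where "e > 0" "a < x - e" "x + e < b" "jumpset a b v \<inter> {x-e<..<x+e} \<subseteq> {x}"
proof -
  obtain e where e: "e > 0" "a < x - e" "x + e < b"
      "\<forall>y\<in>{x-e<..<x}. v y = lval v x" "\<forall>y\<in>{x<..<x+e}. v y = rval v x"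
    by (rule step_fun_one_sided[OF v x])
  let ?L = "lval v x" and ?R = "rval v x"
  have "lval v y = rval v y" if "y \<in> {x-e<..<x+e}" "y \<noteq> x" for y
  proof (cases "y < x")
    case True
    then have "rval v y = ?L" "lval v y = ?L"
      using e(4) that by (auto intro: rval_const_on[of "x - e" x] lval_const_on[of "x - e" x])
    then show ?thesis by simp
  next
    case False
    then have "rval v y = ?R" "lval v y = ?R"
      using e(5) that by (auto intro: rval_const_on[of x "x + e"] lval_const_on[of x "x + e"])
    then show ?thesis by simp
  qed
  then have "jumpset a b v \<inter> {x-e<..<x+e} \<subseteq> {x}"
    unfolding jumpset_def by blast
  then show ?thesis using that e by blast
qed

lemma step_fun_ae_eq_rval:
  assumes "step_fun a b v"
  obtains S where "finite S" "\<forall>x\<in>{a<..<b} - S. v x = rval v x"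
proof -
  obtain S where S: "finite S" "\<forall>z\<in>{a<..<b} - S. \<forall>\<^sub>F y in nhds z. v y = v z"
    using assms unfolding step_fun_iff_eventually by blast
  have "v x = rval v x" if "x \<in> {a<..<b} - S" for x
    using rval_lval_locally_const(1)[of v x] S(2) that by simp
  then show ?thesis using that S(1) by blast
qed

lemma rval_locally_const_off_jumpset:
  assumes v: "step_fun a b v" and x: "x \<in> {a<..<b}" "x \<notin> jumpset a b v"
  shows "\<forall>\<^sub>F y in nhds x. rval v y = rval v x"
proof -
  obtain e where e: "e > 0" "a < x - e" "x + e < b"
      "\<forall>y\<in>{x-e<..<x}. v y = lval v x" "\<forall>y\<in>{x<..<x+e}. v y = rval v x"
    by (rule step_fun_one_sided[OF v x(1)])
  have no_jump: "lval v x = rval v x"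
    using x unfolding jumpset_def by auto
  have near: "rval v y = rval v x" if "y \<in> {x-e<..<x+e}" for y
  proof -
    consider "y < x" | "y = x" | "x < y" by linarith
    then show ?thesis
    proof cases
      case 1
      have "rval v y = lval v x" using e(4) that 1 by (intro rval_const_on[of "x - e" x]) auto
      then show ?thesis using no_jump by simp
    next
      case 3
      show ?thesis using e(5) that 3 by (intro rval_const_on[of x "x + e"]) auto
    qed simp
  qed
  have "\<forall>\<^sub>F y in nhds x. y \<in> {x-e<..<x+e}"
    using e(1) by (intro eventually_nhds_in_open) auto
  then show ?thesis by (rule eventually_mono) (rule near)
qed

lemma step_fun_const_between_jumps:
  assumes v: "step_fun a b v" and pq: "a \<le> p" "p < q" "q \<le> b"
    and no_jumps: "jumpset a b v \<inter> {p<..<q} = {}"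
  obtains c where "\<forall>y\<in>{p<..<q}. rval v y = c \<and> lval v y = c"
    "a < p \<Longrightarrow> rval v p = c" "q < b \<Longrightarrow> lval v q = c"
proof -
  have inside: "y \<in> {a<..<b}" "y \<notin> jumpset a b v" if "y \<in> {p<..<q}" for y
    using that pq no_jumps by auto
  then have no_jump: "lval v y = rval v y" if "y \<in> {p<..<q}" for y
    using that unfolding jumpset_def by blast
  have "\<forall>y\<in>{p<..<q}. \<forall>\<^sub>F z in nhds y. rval v z = rval v y"
    using rval_locally_const_off_jumpset[OF v] inside by blast
  then obtain c where c: "\<forall>y\<in>{p<..<q}. rval v y = c"
    by (rule connected_locally_const_imp_const[OF connected_Ioo])
  show ?thesis
  proof (rule that[of c])
    show "\<forall>y\<in>{p<..<q}. rval v y = c \<and> lval v y = c"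
      using c no_jump by simp
  next
    assume "a < p"
    then have "p \<in> {a<..<b}" using pq by auto
    then obtain e where e: "e > 0" "\<forall>y\<in>{p<..<p+e}. v y = rval v p"
      using step_fun_one_sided[OF v] by metis
    obtain y where y: "p < y" "y < min (p + e) q"
      using dense[of p "min (p + e) q"] e(1) pq(2) by auto
    have "rval v y = rval v p" using e y by (intro rval_const_on) auto
    then show "rval v p = c" using c y by auto
  next
    assume "q < b"
    then have "q \<in> {a<..<b}" using pq by auto
    then obtain e where e: "e > 0" "\<forall>y\<in>{q-e<..<q}. v y = lval v q"
      using step_fun_one_sided[OF v] by metis
    obtain y where y: "max (q - e) p < y" "y < q"
      using dense[of "max (q - e) p" q] e(1) pq(2) by auto
    have "lval v y = lval v q" using e y by (intro lval_const_on) auto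
    then show "lval v q = c" using c y no_jump by auto
  qed
qed

lemma integrable_locally_const_off_finite:
  fixes v :: "real \<Rightarrow> real" and f :: "real \<Rightarrow> real \<Rightarrow> real"
  assumes "finite S" "\<forall>y\<in>{p<..<q} - S. \<forall>\<^sub>F z in nhds y. v z = v y"
    and f: "\<And>c. continuous_on UNIV (\<lambda>x. f x c)"
  shows "(\<lambda>x. f x (v x)) integrable_on {p..q}"
  using assms(1,2)
proof (induction S arbitrary: p q rule: finite_induct)
  case empty
  then have "\<forall>y\<in>{p<..<q}. \<forall>\<^sub>F z in nhds y. v z = v y" by simp
  then obtain c where c: "\<forall>y\<in>{p<..<q}. v y = c"
    by (rule connected_locally_const_imp_const[OF connected_Ioo])
  have "(\<lambda>x. f x c) integrable_on {p..q}"
    by (intro integrable_continuous_interval continuous_on_subset[OF f]) simp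
  then show ?case
    by (rule integrable_spike_finite[of "{p, q}", rotated 2]) (use c in auto)
next
  case (insert s S)
  show ?case
  proof (cases "s \<in> {p<..<q}")
    case True
    have "{p<..<s} - S \<subseteq> {p<..<q} - insert s S" "{s<..<q} - S \<subseteq> {p<..<q} - insert s S"
      using True by auto
    then have "(\<lambda>x. f x (v x)) integrable_on {p..s}" "(\<lambda>x. f x (v x)) integrable_on {s..q}"
      using insert.prems by (intro insert.IH; blast)+
    then show ?thesis
      by (rule Henstock_Kurzweil_Integration.integrable_combine[rotated 2]) (use True in auto)
  next
    case False
    then have "{p<..<q} - S = {p<..<q} - insert s S" by blast
    then show ?thesis using insert.prems by (intro insert.IH) simp
  qed
qed

lemma step_fun_integrable:
  fixes f :: "real \<Rightarrow> real \<Rightarrow> real"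
  assumes "step_fun a b v" "\<And>c. continuous_on UNIV (\<lambda>x. f x c)"
  shows "(\<lambda>x. f x (v x)) integrable_on {a..b}"
  using assms integrable_locally_const_off_finite unfolding step_fun_iff_eventually by blast

section \<open>The fidelity term\<close>

definition fidelity :: "real \<Rightarrow> real \<Rightarrow> real \<Rightarrow> real \<Rightarrow> real" where
  "fidelity M c p q = c\<^sup>2 * (q - p) - c * M * (q\<^sup>2 - p\<^sup>2) + M\<^sup>2 * (q ^ 3 - p ^ 3) / 3"

lemma has_integral_fidelity:
  assumes "p \<le> q"
  shows "((\<lambda>x. (c - M * x)\<^sup>2) has_integral fidelity M c p q) {p..q}"
proof -
  let ?F = "\<lambda>x. c\<^sup>2 * x - c * M * x\<^sup>2 + M\<^sup>2 * x ^ 3 / 3"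
  have "((\<lambda>x. (c - M * x)\<^sup>2) has_integral ?F q - ?F p) {p..q}"
  proof (rule fundamental_theorem_of_calculus[OF assms])
    fix x
    have "(?F has_real_derivative (c - M * x)\<^sup>2) (at x within {p..q})"
      by (auto intro!: derivative_eq_intros simp: power2_eq_square algebra_simps)
    then show "(?F has_vector_derivative (c - M * x)\<^sup>2) (at x within {p..q})"
      by (simp add: has_real_derivative_iff_has_vector_derivative)
  qed
  then show ?thesis by (simp add: fidelity_def algebra_simps diff_divide_distrib)
qed

lemma fidelity_diff:
  "fidelity M c p q - fidelity M d p q = (c - d) * (q - p) * (c + d - M * (p + q))"
  by (simp add: fidelity_def power2_eq_square algebra_simps)

lemma fidelity_eq_midpoint_plus:
  "fidelity M c p q = fidelity M (M * (p + q) / 2) p q + (q - p) * (c - M * (p + q) / 2)\<^sup>2"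
proof -
  have "c + M * (p + q) / 2 - M * (p + q) = c - M * (p + q) / 2" by simp
  then have "fidelity M c p q - fidelity M (M * (p + q) / 2) p q = (q - p) * (c - M * (p + q) / 2)\<^sup>2"
    using fidelity_diff[of M c p q "M * (p + q) / 2"] by (simp add: power2_eq_square mult_ac)
  then show ?thesis by linarith
qed

lemma fidelity_gain_off_line:
  assumes "p \<le> q" and off_line: "\<forall>y\<in>{p<..<q}. c \<noteq> M * y"
  shows "M\<^sup>2 * (q - p) ^ 3 / 4 \<le> fidelity M c p q - fidelity M (M * (p + q) / 2) p q"
proof -
  have "\<bar>M\<bar> * (q - p) / 2 \<le> \<bar>c - M * (p + q) / 2\<bar>"
  proof (cases "M = 0")
    case False
    define y where "y = c / M"
    have "y \<notin> {p<..<q}" using off_line False unfolding y_def by force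
    then have "(q - p) / 2 \<le> \<bar>y - (p + q) / 2\<bar>"
      using assms(1) by (auto simp: abs_if field_simps not_less)
    then have "\<bar>M\<bar> * ((q - p) / 2) \<le> \<bar>M\<bar> * \<bar>y - (p + q) / 2\<bar>"
      by (rule mult_left_mono) simp
    also have "\<dots> = \<bar>c - M * (p + q) / 2\<bar>"
      using False unfolding y_def by (simp add: abs_mult[symmetric] algebra_simps)
    finally show ?thesis by simp
  qed simp
  then have "(\<bar>M\<bar> * (q - p) / 2)\<^sup>2 \<le> \<bar>c - M * (p + q) / 2\<bar>\<^sup>2"
    by (rule power_mono) (use assms(1) in simp)
  then have "(\<bar>M\<bar> * (q - p) / 2)\<^sup>2 \<le> (c - M * (p + q) / 2)\<^sup>2"
    by simp
  then have "(q - p) * (\<bar>M\<bar> * (q - p) / 2)\<^sup>2 \<le> (q - p) * (c - M * (p + q) / 2)\<^sup>2"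
    using assms(1) by (intro mult_left_mono) auto
  then show ?thesis
    using fidelity_eq_midpoint_plus[of M c p q] by (simp add: power2_eq_square power3_eq_cube algebra_simps)
qed

section \<open>Competitors constant on a subinterval\<close>

definition patch :: "(real \<Rightarrow> real) \<Rightarrow> real \<Rightarrow> real \<Rightarrow> real \<Rightarrow> real \<Rightarrow> real" where
  "patch v p q g = (\<lambda>y. if y \<in> {p<..<q} then g else v y)"

lemma step_fun_patch:
  assumes v: "step_fun a b v" and pq: "a < p" "p < q" "q < b"
  shows "step_fun a b (patch v p q g)"
proof -
  obtain S where S: "finite S" "S \<subseteq> {a<..<b}" "\<forall>z\<in>{a<..<b} - S. \<forall>\<^sub>F y in nhds z. v y = v z"
    using v unfolding step_fun_iff_eventually by blast
  have "\<forall>\<^sub>F y in nhds z. patch v p q g y = patch v p q g z"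
    if z: "z \<in> {a<..<b} - (S \<union> {p, q})" for z
  proof (cases "z \<in> {p<..<q}")
    case True
    have "\<forall>\<^sub>F y in nhds z. y \<in> {p<..<q}"
      using True by (intro eventually_nhds_in_open) auto
    then show ?thesis by (rule eventually_mono) (use True in \<open>simp add: patch_def\<close>)
  next
    case False
    then have "z \<in> - {p..q}" using z by auto
    then have "\<forall>\<^sub>F y in nhds z. y \<in> - {p..q}"
      by (intro eventually_nhds_in_open) auto
    moreover have "\<forall>\<^sub>F y in nhds z. v y = v z"
      using S(3) z by blast
    ultimately show ?thesis
      by eventually_elim (use False in \<open>auto simp: patch_def\<close>)
  qed
  moreover have "finite (S \<union> {p, q})" "S \<union> {p, q} \<subseteq> {a<..<b}"
    using S pq by auto
  ultimately show ?thesis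
    unfolding step_fun_iff_eventually by blast
qed

lemma rval_patch:
  assumes "p < q"
  shows "rval (patch v p q g) x = (if x \<in> {p..<q} then g else rval v x)"
proof (cases "x \<in> {p..<q}")
  case True
  have "rval (patch v p q g) x = g"
    using True by (intro rval_const_on[of p q]) (auto simp: patch_def)
  then show ?thesis using True by simp
next
  case False
  have "\<forall>\<^sub>F y in at_right x. patch v p q g y = v y"
  proof (cases "x < p")
    case True
    then show ?thesis by (intro eventually_at_rightI[of x p]) (auto simp: patch_def)
  next
    case False
    then show ?thesis
      using \<open>x \<notin> {p..<q}\<close> by (intro eventually_at_rightI[of x "x + 1"]) (auto simp: patch_def)
  qed
  then have "rval (patch v p q g) x = rval v x"
    unfolding rval_def by (rule Lim_cong) simp
  then show ?thesis using False by auto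
qed

lemma lval_patch:
  assumes "p < q"
  shows "lval (patch v p q g) x = (if x \<in> {p<..q} then g else lval v x)"
proof (cases "x \<in> {p<..q}")
  case True
  have "lval (patch v p q g) x = g"
    using True by (intro lval_const_on[of p q]) (auto simp: patch_def)
  then show ?thesis using True by simp
next
  case False
  have "\<forall>\<^sub>F y in at_left x. patch v p q g y = v y"
  proof (cases "q < x")
    case True
    then show ?thesis by (intro eventually_at_leftI[of q x]) (auto simp: patch_def)
  next
    case False
    then show ?thesis
      using \<open>x \<notin> {p<..q}\<close> by (intro eventually_at_leftI[of "x - 1" x]) (auto simp: patch_def)
  qed
  then have "lval (patch v p q g) x = lval v x"
    unfolding lval_def by (rule Lim_cong) simp
  then show ?thesis using False by auto
qed

lemma jumpset_patch:
  assumes "a < p" "p < q" "q < b"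
  shows "jumpset a b (patch v p q g) =
    (jumpset a b v - {p..q}) \<union> {x. x = p \<and> lval v p \<noteq> g} \<union> {x. x = q \<and> rval v q \<noteq> g}"
  using assms unfolding jumpset_def by (auto simp: rval_patch lval_patch)

lemma integral_patch:
  assumes v: "step_fun a b v" and pq: "a < p" "p < q" "q < b"
    and c: "\<forall>y\<in>{p<..<q}. rval v y = c"
  shows "integral {a..b} (\<lambda>x. (patch v p q g x - M * x)\<^sup>2)
    = integral {a..b} (\<lambda>x. (v x - M * x)\<^sup>2) + fidelity M g p q - fidelity M c p q"
proof -
  obtain S where S: "finite S" "\<forall>x\<in>{a<..<b} - S. v x = rval v x"
    using step_fun_ae_eq_rval[OF v] by blast
  define d where "d x = (if x \<in> {p..q} then (g - M * x)\<^sup>2 - (c - M * x)\<^sup>2 else 0)" for x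
  have "((\<lambda>x. (g - M * x)\<^sup>2 - (c - M * x)\<^sup>2) has_integral fidelity M g p q - fidelity M c p q) {p..q}"
    using pq by (intro has_integral_diff has_integral_fidelity) auto
  then have "(d has_integral fidelity M g p q - fidelity M c p q) {a..b}"
    using has_integral_restrict_closed_subinterval[of _ _ p q a b] pq
    unfolding d_def by (simp add: cbox_interval)
  moreover have "(\<lambda>x. (v x - M * x)\<^sup>2) integrable_on {a..b}"
    using v by (rule step_fun_integrable) (intro continuous_intros)
  ultimately have "((\<lambda>x. (v x - M * x)\<^sup>2 + d x) has_integral
      integral {a..b} (\<lambda>x. (v x - M * x)\<^sup>2) + (fidelity M g p q - fidelity M c p q)) {a..b}"
    by (intro has_integral_add) auto
  then have "((\<lambda>x. (patch v p q g x - M * x)\<^sup>2) has_integral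
      integral {a..b} (\<lambda>x. (v x - M * x)\<^sup>2) + (fidelity M g p q - fidelity M c p q)) {a..b}"
  proof (rule has_integral_spike_finite[OF finite.insertI[OF finite.insertI[OF S(1)]], rotated])
    fix x assume x: "x \<in> {a..b} - insert p (insert q S)"
    show "(patch v p q g x - M * x)\<^sup>2 = (v x - M * x)\<^sup>2 + d x"
    proof (cases "x \<in> {p<..<q}")
      case True
      then have "v x = c" using S(2) c x pq by auto
      then show ?thesis using True by (simp add: patch_def d_def)
    next
      case False
      then show ?thesis using x by (auto simp: patch_def d_def)
    qed
  qed
  then show ?thesis by (simp add: integral_unique)
qed

lemma local_min_patch:
  assumes lm: "local_min \<alpha> \<beta> (\<lambda>x. M * x) a b v" and pq: "a < p" "p < q" "q < b"
    and c: "\<forall>y\<in>{p<..<q}. rval v y = c"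
  shows "\<beta> * (fidelity M c p q - fidelity M g p q)
    \<le> \<alpha> * (real (card (jumpset a b (patch v p q g))) - real (card (jumpset a b v)))"
proof -
  have v: "step_fun a b v" using lm unfolding local_min_def by blast
  have "rval (patch v p q g) a = rval v a" "lval (patch v p q g) b = lval v b"
    using pq by (simp_all add: rval_patch lval_patch)
  then have "G \<alpha> \<beta> (\<lambda>x. M * x) a b v \<le> G \<alpha> \<beta> (\<lambda>x. M * x) a b (patch v p q g)"
    using lm step_fun_patch[OF v pq] unfolding local_min_def by blast
  then show ?thesis
    unfolding G_def integral_patch[OF v pq c] by (simp add: algebra_simps)
qed

section \<open>Local minimizers\<close>

lemma local_min_shift_jump_right:
  assumes lm: "local_min \<alpha> \<beta> (\<lambda>x. M * x) a b v" and "\<beta> > 0"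
    and x: "x \<in> jumpset a b v" and t: "0 < t" "x + t < b"
    and no_jumps: "jumpset a b v \<inter> {x<..x+t} = {}"
  shows "(rval v x - lval v x) * (rval v x + lval v x - M * (2 * x + t)) \<le> 0"
proof -
  let ?J = "jumpset a b v" and ?L = "lval v x" and ?R = "rval v x"
  have v: "step_fun a b v" using lm unfolding local_min_def by blast
  have ax: "a < x" and jump: "?L \<noteq> ?R" using x unfolding jumpset_def by auto
  have "?J \<inter> {x<..<x+t} = {}" using no_jumps by auto
  then obtain c where c: "\<forall>y\<in>{x<..<x+t}. rval v y = c \<and> lval v y = c"
      "a < x \<Longrightarrow> rval v x = c" "x + t < b \<Longrightarrow> lval v (x + t) = c"
    using step_fun_const_between_jumps[OF v, of x "x + t"] ax t by auto
  have R: "\<forall>y\<in>{x<..<x+t}. rval v y = ?R" using c ax by simp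
  have "x + t \<in> {x<..x+t}" using t(1) by simp
  then have "x + t \<notin> ?J" using no_jumps by blast
  then have "rval v (x + t) = ?R" using c ax t unfolding jumpset_def by auto
  moreover have "?J - {x..x+t} = ?J - {x}" using no_jumps t(1) by auto
  ultimately have "jumpset a b (patch v x (x + t) ?L) = insert (x + t) (?J - {x})"
    using jumpset_patch[of a x "x + t" b v ?L] ax t jump by auto
  then have "card (jumpset a b (patch v x (x + t) ?L)) = card ?J"
    using card_insert_Diff_swap[OF jumpset_finite[OF v] x \<open>x + t \<notin> ?J\<close>] by simp
  then have "\<beta> * (fidelity M ?R x (x + t) - fidelity M ?L x (x + t)) \<le> 0"
    using local_min_patch[OF lm ax _ t(2) R, of ?L] t(1) by simp
  then have "fidelity M ?R x (x + t) - fidelity M ?L x (x + t) \<le> 0"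
    using \<open>\<beta> > 0\<close> by (simp add: mult_le_0_iff)
  then have "t * ((?R - ?L) * (?R + ?L - M * (2 * x + t))) \<le> 0"
    unfolding fidelity_diff by (simp add: algebra_simps)
  then show ?thesis using t(1) by (simp add: mult_le_0_iff)
qed

lemma local_min_shift_jump_left:
  assumes lm: "local_min \<alpha> \<beta> (\<lambda>x. M * x) a b v" and "\<beta> > 0"
    and x: "x \<in> jumpset a b v" and t: "0 < t" "a < x - t"
    and no_jumps: "jumpset a b v \<inter> {x-t..<x} = {}"
  shows "0 \<le> (rval v x - lval v x) * (rval v x + lval v x - M * (2 * x - t))"
proof -
  let ?J = "jumpset a b v" and ?L = "lval v x" and ?R = "rval v x"
  have v: "step_fun a b v" using lm unfolding local_min_def by blast
  have xb: "x < b" and jump: "?L \<noteq> ?R" using x unfolding jumpset_def by auto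
  have "?J \<inter> {x-t<..<x} = {}" using no_jumps by auto
  then obtain c where c: "\<forall>y\<in>{x-t<..<x}. rval v y = c \<and> lval v y = c"
      "a < x - t \<Longrightarrow> rval v (x - t) = c" "x < b \<Longrightarrow> lval v x = c"
    using step_fun_const_between_jumps[OF v, of "x - t" x] xb t by auto
  have L: "\<forall>y\<in>{x-t<..<x}. rval v y = ?L" using c xb by simp
  have "x - t \<in> {x-t..<x}" using t(1) by simp
  then have "x - t \<notin> ?J" using no_jumps by blast
  then have "lval v (x - t) = ?L" using c xb t unfolding jumpset_def by auto
  moreover have "?J - {x-t..x} = ?J - {x}" using no_jumps t(1) by auto
  ultimately have "jumpset a b (patch v (x - t) x ?R) = insert (x - t) (?J - {x})"
    using jumpset_patch[of a "x - t" x b v ?R] xb t jump by auto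
  then have "card (jumpset a b (patch v (x - t) x ?R)) = card ?J"
    using card_insert_Diff_swap[OF jumpset_finite[OF v] x \<open>x - t \<notin> ?J\<close>] by simp
  then have "\<beta> * (fidelity M ?L (x - t) x - fidelity M ?R (x - t) x) \<le> 0"
    using local_min_patch[OF lm t(2) _ xb L, of ?R] t(1) by simp
  then have "fidelity M ?L (x - t) x - fidelity M ?R (x - t) x \<le> 0"
    using \<open>\<beta> > 0\<close> by (simp add: mult_le_0_iff)
  then have "0 \<le> t * ((?R - ?L) * (?R + ?L - M * (2 * x - t)))"
    unfolding fidelity_diff by (simp add: algebra_simps)
  then show ?thesis using t(1) by (simp add: zero_le_mult_iff)
qed

lemma local_min_jump_balanced:
  assumes lm: "local_min \<alpha> \<beta> (\<lambda>x. M * x) a b v" and "\<beta> > 0" and x: "x \<in> jumpset a b v"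
  shows "rval v x - M * x = M * x - lval v x"
    and "M \<noteq> 0 \<Longrightarrow> sgn (rval v x - M * x) = sgn M"
proof -
  let ?J = "jumpset a b v" and ?L = "lval v x" and ?R = "rval v x"
  define D where "D = ?R - ?L"
  define K where "K = ?R + ?L - 2 * M * x"
  have v: "step_fun a b v" using lm unfolding local_min_def by blast
  have "x \<in> {a<..<b}" and "D \<noteq> 0" using x unfolding jumpset_def D_def by auto
  then obtain e where e: "e > 0" "a < x - e" "x + e < b" "?J \<inter> {x-e<..<x+e} \<subseteq> {x}"
    using jumpset_isolated[OF v] by metis
  \<comment> \<open>Shifting the jump by t gives first-order condition K = 0 and second-order condition D M \<ge> 0.\<close>
  have shift: "D * K \<le> D * M * t" "- (D * K) \<le> D * M * t" if t: "t \<in> {0<..<e}" for t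
  proof -
    have "?J \<inter> {x<..x+t} = {}" "?J \<inter> {x-t..<x} = {}" using e(4) t by auto
    then have "D * (K - M * t) \<le> 0" "0 \<le> D * (K + M * t)"
      using local_min_shift_jump_right[OF lm \<open>\<beta> > 0\<close> x, of t]
        local_min_shift_jump_left[OF lm \<open>\<beta> > 0\<close> x, of t] t e
      unfolding D_def K_def by (auto simp: algebra_simps)
    then show "D * K \<le> D * M * t" "- (D * K) \<le> D * M * t"
      by (simp_all add: algebra_simps)
  qed
  have "D * K \<le> 0" "- (D * K) \<le> 0"
    using shift by (blast intro: nonpos_if_le_small_multiples[OF e(1)])+
  then have "K = 0" using \<open>D \<noteq> 0\<close> by simp
  then show balanced: "?R - M * x = M * x - ?L" unfolding K_def by simp
  assume "M \<noteq> 0"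
  have "0 \<le> D * M * (e / 2)" using shift(1)[of "e / 2"] \<open>K = 0\<close> e(1) by simp
  then have "0 \<le> D * M" using e(1) by (simp add: zero_le_mult_iff)
  moreover have "D = 2 * (?R - M * x)" using balanced unfolding D_def by simp
  ultimately have "0 \<le> (?R - M * x) * M" "(?R - M * x) * M \<noteq> 0"
    using \<open>D \<noteq> 0\<close> \<open>M \<noteq> 0\<close> by (simp_all add: mult.assoc zero_le_mult_iff)
  then have "0 < (?R - M * x) * M" by linarith
  then show "sgn (?R - M * x) = sgn M"
    by (auto simp: zero_less_mult_iff)
qed

lemma local_min_between_consecutive_jumps:
  assumes lm: "local_min \<alpha> \<beta> (\<lambda>x. M * x) a b v" and "0 \<le> \<alpha>" "\<beta> > 0"
    and x: "x1 \<in> jumpset a b v" "x2 \<in> jumpset a b v" "x1 < x2"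
    and no_jumps: "{x1<..<x2} \<inter> jumpset a b v = {}"
  shows "\<forall>x\<in>{x1<..<x2}. rval v x = M * (x1 + x2) / 2"
proof -
  let ?J = "jumpset a b v" and ?m = "M * (x1 + x2) / 2"
  have v: "step_fun a b v" using lm unfolding local_min_def by blast
  have ab: "a < x1" "x2 < b" using x unfolding jumpset_def by auto
  have "?J \<inter> {x1<..<x2} = {}" using no_jumps by blast
  then obtain c where c: "\<forall>y\<in>{x1<..<x2}. rval v y = c \<and> lval v y = c"
      "a < x1 \<Longrightarrow> rval v x1 = c" "x2 < b \<Longrightarrow> lval v x2 = c"
    using step_fun_const_between_jumps[OF v, of x1 x2] ab x(3) by auto
  have "jumpset a b (patch v x1 x2 ?m) \<subseteq> ?J"
    using jumpset_patch[of a x1 x2 b v ?m] ab x by auto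
  then have "card (jumpset a b (patch v x1 x2 ?m)) \<le> card ?J"
    by (rule card_mono[OF jumpset_finite[OF v]])
  then have "\<alpha> * (real (card (jumpset a b (patch v x1 x2 ?m))) - real (card ?J)) \<le> 0"
    using \<open>0 \<le> \<alpha>\<close> by (simp add: mult_le_0_iff)
  then have "\<beta> * (fidelity M c x1 x2 - fidelity M ?m x1 x2) \<le> 0"
    using local_min_patch[OF lm ab(1) x(3) ab(2), of c ?m] c(1) by auto
  then have "(x2 - x1) * (c - ?m)\<^sup>2 \<le> 0"
    using \<open>\<beta> > 0\<close> fidelity_eq_midpoint_plus[of M c x1 x2] by (simp add: mult_le_0_iff)
  then have "c = ?m" using x(3) by (simp add: mult_le_0_iff)
  then show ?thesis using c by simp
qed

lemma critical_length_cube: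
  fixes \<alpha> \<beta> M :: real
  assumes "\<alpha> > 0" "\<beta> > 0" "M \<noteq> 0"
  shows "\<beta> * M\<^sup>2 * (2 * (\<alpha> / (\<beta> * M\<^sup>2)) powr (1/3)) ^ 3 = 8 * \<alpha>"
proof -
  have "((\<alpha> / (\<beta> * M\<^sup>2)) powr (1/3)) ^ 3 = \<alpha> / (\<beta> * M\<^sup>2)"
    using assms by (simp add: powr_power)
  then show ?thesis using assms by (simp add: power_mult_distrib)
qed

lemma local_min_meets_line_on_long_interval:
  assumes lm: "local_min \<alpha> \<beta> (\<lambda>x. M * x) a b v" and "\<alpha> > 0" "\<beta> > 0" "M \<noteq> 0"
    and long: "b - a > 2 * (\<alpha> / (\<beta> * M\<^sup>2)) powr (1/3)"
  shows "jumpset a b v \<noteq> {} \<or> intersections M a b v \<noteq> {}"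
proof (rule ccontr)
  assume "\<not> ?thesis"
  then have J: "jumpset a b v = {}" and I: "intersections M a b v = {}" by auto
  have v: "step_fun a b v" using lm unfolding local_min_def by blast
  define L0 where "L0 = 2 * (\<alpha> / (\<beta> * M\<^sup>2)) powr (1/3)"
  \<comment> \<open>The patched interval must stay inside (a,b): patching up to a or b would change the
    boundary values.\<close>
  define p where "p = a + (b - a - L0) / 4"
  define q where "q = b - (b - a - L0) / 4"
  have "L0 \<ge> 0" unfolding L0_def by simp
  have "L0 < b - a" using long unfolding L0_def .
  then have pq: "a < p" "p < q" "q < b" "L0 < q - p"
    using \<open>L0 \<ge> 0\<close> by (auto simp: p_def q_def field_simps)
  obtain c where c: "\<forall>y\<in>{p<..<q}. rval v y = c \<and> lval v y = c"
    using step_fun_const_between_jumps[OF v, of p q] pq J by auto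
  have off_line: "\<forall>y\<in>{p<..<q}. c \<noteq> M * y"
    using c I J pq unfolding intersections_def by auto
  let ?m = "M * (p + q) / 2"
  have "jumpset a b (patch v p q ?m) \<subseteq> {p, q}"
    using jumpset_patch[of a p q b v ?m] pq J by auto
  then have "card (jumpset a b (patch v p q ?m)) \<le> card {p, q}"
    by (rule card_mono[rotated]) simp
  also have "\<dots> \<le> 2" by (simp add: card_insert_if)
  finally have "\<alpha> * real (card (jumpset a b (patch v p q ?m))) \<le> \<alpha> * 2"
    using \<open>\<alpha> > 0\<close> by simp
  then have "\<beta> * (fidelity M c p q - fidelity M ?m p q) \<le> 2 * \<alpha>"
    using local_min_patch[OF lm pq(1-3), of c ?m] c J by simp
  moreover have "\<beta> * (M\<^sup>2 * (q - p) ^ 3 / 4) \<le> \<beta> * (fidelity M c p q - fidelity M ?m p q)"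
    using fidelity_gain_off_line[OF _ off_line] pq \<open>\<beta> > 0\<close> by simp
  ultimately have "\<beta> * M\<^sup>2 * (q - p) ^ 3 \<le> 8 * \<alpha>" by simp
  moreover have "\<beta> * M\<^sup>2 * L0 ^ 3 < \<beta> * M\<^sup>2 * (q - p) ^ 3"
    using pq(4) \<open>L0 \<ge> 0\<close> \<open>\<beta> > 0\<close> \<open>M \<noteq> 0\<close> by (intro mult_strict_left_mono power_strict_mono) auto
  moreover have "\<beta> * M\<^sup>2 * L0 ^ 3 = 8 * \<alpha>"
    unfolding L0_def using assms(2-4) by (rule critical_length_cube)
  ultimately show False by linarith
qed

lemma local_min_jump_between_intersections:
  assumes lm: "local_min \<alpha> \<beta> (\<lambda>x. M * x) a b v" and "0 \<le> \<alpha>" "\<beta> > 0" "M \<noteq> 0"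
    and y: "y1 \<in> intersections M a b v" "y2 \<in> intersections M a b v" "y1 < y2"
      "{y1<..<y2} \<inter> intersections M a b v = {}"
  shows "jumpset a b v \<inter> {y1<..<y2} = {(y1 + y2) / 2}"
proof -
  let ?J = "jumpset a b v"
  have v: "step_fun a b v" using lm unfolding local_min_def by blast
  have y1: "a < y1" "rval v y1 = M * y1"
    using y(1) unfolding intersections_def by auto
  have y2: "y2 < b" "lval v y2 = M * y2"
    using y(2) unfolding intersections_def jumpset_def by auto
  have unique: "x = x'" if x: "x \<in> ?J \<inter> {y1<..<y2}" "x' \<in> ?J \<inter> {y1<..<y2}" "x \<le> x'" for x x'
  proof (rule ccontr)
    assume "x \<noteq> x'"
    then obtain z where z: "z \<in> ?J" "x < z" "z \<le> x'" "{x<..<z} \<inter> ?J = {}"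
      using finite_nearest_above[OF jumpset_finite[OF v], of x' x] x by auto
    let ?w = "(x + z) / 2"
    have "?w \<in> {x<..<z}" using z(2) by simp
    then have "?w \<notin> ?J" using z(4) by blast
    have "rval v ?w = M * ?w"
      using local_min_between_consecutive_jumps[OF lm assms(2,3), of x z] x z by auto
    then have "?w \<in> {y1<..<y2} \<inter> intersections M a b v"
      using x z y1 y2 \<open>?w \<notin> ?J\<close> unfolding intersections_def by auto
    then show False using y(4) by blast
  qed
  have "?J \<inter> {y1<..<y2} \<noteq> {}"
  proof
    assume "?J \<inter> {y1<..<y2} = {}"
    then obtain c where "\<forall>y\<in>{y1<..<y2}. rval v y = c \<and> lval v y = c"
        "a < y1 \<Longrightarrow> rval v y1 = c" "y2 < b \<Longrightarrow> lval v y2 = c"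
      using step_fun_const_between_jumps[OF v, of y1 y2] y1 y2 y(3) by auto
    then have "M * y1 = M * y2" using y1 y2 by simp
    then show False using y(3) \<open>M \<noteq> 0\<close> by simp
  qed
  then obtain x where jx: "x \<in> ?J" "y1 < x" "x < y2" by auto
  have x: "?J \<inter> {y1<..<y2} = {x}"
  proof (intro equalityI subsetI)
    fix x' assume "x' \<in> ?J \<inter> {y1<..<y2}"
    then show "x' \<in> {x}" using unique[of x x'] unique[of x' x] jx by (cases "x \<le> x'") auto
  qed (use jx in auto)
  have "z \<notin> ?J" if "z \<in> {y1<..<y2}" "z \<noteq> x" for z using x that by blast
  then have "?J \<inter> {y1<..<x} = {}" "?J \<inter> {x<..<y2} = {}" using jx by auto
  moreover obtain c1 where "\<forall>y\<in>{y1<..<x}. rval v y = c1 \<and> lval v y = c1"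
      "a < y1 \<Longrightarrow> rval v y1 = c1" "x < b \<Longrightarrow> lval v x = c1"
    using step_fun_const_between_jumps[OF v, of y1 x] calculation(1) y1 y2 jx by auto
  moreover obtain c2 where "\<forall>y\<in>{x<..<y2}. rval v y = c2 \<and> lval v y = c2"
      "a < x \<Longrightarrow> rval v x = c2" "y2 < b \<Longrightarrow> lval v y2 = c2"
    using step_fun_const_between_jumps[OF v, of x y2] calculation(2) y1 y2 jx by auto
  ultimately have "lval v x = M * y1" "rval v x = M * y2"
    using y1 y2 jx by auto
  then have "M * y2 - M * x = M * x - M * y1"
    using local_min_jump_balanced(1)[OF lm \<open>\<beta> > 0\<close> jx(1)] y1 y2 by simp
  then have "M * (y1 + y2 - 2 * x) = 0" by (simp add: algebra_simps)
  then have "x = (y1 + y2) / 2" using \<open>M \<noteq> 0\<close> by simp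
  then show ?thesis using x by simp
qed

lemma local_min_intersections_equally_spaced:
  assumes lm: "local_min \<alpha> \<beta> (\<lambda>x. M * x) a b v" and "0 \<le> \<alpha>" "\<beta> > 0" "M \<noteq> 0"
    and y: "y1 \<in> intersections M a b v" "y2 \<in> intersections M a b v" "y3 \<in> intersections M a b v"
      "y1 < y2" "y2 < y3"
      "{y1<..<y2} \<inter> intersections M a b v = {}" "{y2<..<y3} \<inter> intersections M a b v = {}"
  shows "y2 - y1 = y3 - y2"
proof -
  let ?J = "jumpset a b v" and ?x = "(y1 + y2) / 2" and ?x' = "(y2 + y3) / 2"
  have j1: "?J \<inter> {y1<..<y2} = {?x}"
    by (rule local_min_jump_between_intersections[OF lm assms(2-4) y(1,2,4,6)])
  have j2: "?J \<inter> {y2<..<y3} = {?x'}"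
    by (rule local_min_jump_between_intersections[OF lm assms(2-4) y(2,3,5,7)])
  have y2: "y2 \<notin> ?J" "rval v y2 = M * y2"
    using y(2) unfolding intersections_def by auto
  have "z \<notin> ?J" if "?x < z" "z < ?x'" for z
  proof -
    have "z \<in> {y1<..<y2} - {?x} \<or> z = y2 \<or> z \<in> {y2<..<y3} - {?x'}"
      using that y(4,5) by auto
    then show ?thesis using j1 j2 y2(1) by blast
  qed
  then have gap: "{?x<..<?x'} \<inter> ?J = {}" by auto
  have "?x \<in> ?J" "?x' \<in> ?J" "?x < ?x'" "y2 \<in> {?x<..<?x'}"
    using j1 j2 y(4,5) by auto
  then have "rval v y2 = M * (?x + ?x') / 2"
    using local_min_between_consecutive_jumps[OF lm assms(2,3) _ _ _ gap] by blast
  then have "M * y2 = M * ((?x + ?x') / 2)" using y2(2) by simp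
  then have "y2 = (?x + ?x') / 2" using \<open>M \<noteq> 0\<close> by simp
  then show ?thesis by (simp add: field_simps)
qed

theorem lemma4p5:
  fixes \<alpha> \<beta> M a b :: real and v :: "real \<Rightarrow> real"
  assumes "\<alpha> > 0" "\<beta> > 0" "a < b"
    and "local_min \<alpha> \<beta> (\<lambda>x. M * x) a b v"
  shows
   "(M \<noteq> 0 \<and> b - a > 2 * (\<alpha> / (\<beta> * M\<^sup>2)) powr (1/3) \<longrightarrow>
       jumpset a b v \<noteq> {} \<or> intersections M a b v \<noteq> {})
  \<and> (\<forall>x\<in>jumpset a b v. rval v x - M * x = M * x - lval v x \<and>
       (M \<noteq> 0 \<longrightarrow> sgn (rval v x - M * x) = sgn M))
  \<and> (\<forall>x1 x2. x1 \<in> jumpset a b v \<and> x2 \<in> jumpset a b v \<and> x1 < x2 \<and>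
       {x1<..<x2} \<inter> jumpset a b v = {} \<longrightarrow>
       (\<forall>x\<in>{x1<..<x2}. rval v x = M * (x1 + x2) / 2))
  \<and> (M \<noteq> 0 \<longrightarrow> (\<forall>y1 y2 y3. y1 \<in> intersections M a b v \<and> y2 \<in> intersections M a b v \<and>
       y3 \<in> intersections M a b v \<and> y1 < y2 \<and> y2 < y3 \<and>
       {y1<..<y2} \<inter> intersections M a b v = {} \<and> {y2<..<y3} \<inter> intersections M a b v = {}
       \<longrightarrow> y2 - y1 = y3 - y2))"
proof -
  note lm = assms(4) and \<alpha> = less_imp_le[OF assms(1)]
  note parts = local_min_meets_line_on_long_interval[OF lm assms(1,2)]
    local_min_jump_balanced[OF lm assms(2)]
    local_min_between_consecutive_jumps[OF lm \<alpha> assms(2)]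
    local_min_intersections_equally_spaced[OF lm \<alpha> assms(2)]
  show ?thesis
    by (intro conjI; insert parts; blast)
qed

end
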